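(* Let $E,F$ be normed spaces over $\mathbb K$, $F$ spherically complete, and $f\colon E\to F$ a linear isometry. Let $S$ be the set of linear subspaces $M\subseteq F$ with $\operatorname{Im}(f)\subseteq M$ such that the inclusion $\operatorname{Im}(f)\hookrightarrow M$ is immediate. Then (1) $S$ has a maximal element with respect to inclusion; (2) for any maximal element $\breve E$ of $S$, the space $\breve E$ together with the linear isometry $E\to\breve E$, $x\mapsto f(x)$, is a spherical completion of $E$.
   Context: $\mathbb K$: nontrivially normed field with ultrametric absolute value; normed space over $\mathbb K$: normed vector space with $\|x+y\|\le\max(\|x\|,\|y\|)$. $x\perp_m V$ means $\|x\|=\inf_{v\in V}\|x-v\|$. A linear isometry $f\colon E\to F$ is immediate if the only $v\in F$ with $v\perp_m\operatorname{Im}(f)$ is $0$. Spherically complete: every decreasing sequence of closed balls (radii $\ge0$) has nonempty intersection. A spherical completion of $E$ is a spherically complete normed space $\breve E$ over $\mathbb K$ with a linear isometry $i\colon E\to\breve E$ such that no proper spherically complete linear subspace of $\breve E$ contains $i(E)$. *)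

theory Defs
  imports Complex_Main
begin

definition ultra_valued_field :: "('k::field \<Rightarrow> real) \<Rightarrow> bool" where
  "ultra_valued_field absK \<longleftrightarrow>
     absK 0 = 0 \<and> (\<forall>a. a \<noteq> 0 \<longrightarrow> absK a > 0) \<and>
     (\<forall>a b. absK (a * b) = absK a * absK b) \<and>
     (\<forall>a b. absK (a + b) \<le> max (absK a) (absK b)) \<and>
     (\<exists>a. absK a \<noteq> 0 \<and> absK a \<noteq> 1)"

definition ultra_normed_space ::
  "('k::field \<Rightarrow> real) \<Rightarrow> ('k \<Rightarrow> 'v::ab_group_add \<Rightarrow> 'v) \<Rightarrow> ('v \<Rightarrow> real) \<Rightarrow> bool" where
  "ultra_normed_space absK sc nrm \<longleftrightarrow>
     vector_space sc \<and>
     (\<forall>x. nrm x \<ge> 0) \<and> (\<forall>x. nrm x = 0 \<longleftrightarrow> x = 0) \<and>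
     (\<forall>a x. nrm (sc a x) = absK a * nrm x) \<and>
     (\<forall>x y. nrm (x + y) \<le> max (nrm x) (nrm y))"

definition orth_m :: "('v::ab_group_add \<Rightarrow> real) \<Rightarrow> 'v \<Rightarrow> 'v set \<Rightarrow> bool" where
  "orth_m nrm x V \<longleftrightarrow> nrm x = (INF v\<in>V. nrm (x - v))"

definition immediate :: "('w::ab_group_add \<Rightarrow> real) \<Rightarrow> ('v \<Rightarrow> 'w) \<Rightarrow> 'v set \<Rightarrow> 'w set \<Rightarrow> bool" where
  "immediate nrm g A M \<longleftrightarrow> (\<forall>v\<in>M. orth_m nrm v (g ` A) \<longrightarrow> v = 0)"

definition cball_in :: "('v::ab_group_add \<Rightarrow> real) \<Rightarrow> 'v set \<Rightarrow> 'v \<Rightarrow> real \<Rightarrow> 'v set" where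
  "cball_in nrm M c r = {y \<in> M. nrm (y - c) \<le> r}"

definition spherically_complete :: "('v::ab_group_add \<Rightarrow> real) \<Rightarrow> 'v set \<Rightarrow> bool" where
  "spherically_complete nrm M \<longleftrightarrow>
     (\<forall>(c::nat \<Rightarrow> 'v) (r::nat \<Rightarrow> real).
        (\<forall>n. c n \<in> M \<and> r n \<ge> 0) \<and>
        (\<forall>n. cball_in nrm M (c (Suc n)) (r (Suc n)) \<subseteq> cball_in nrm M (c n) (r n)) \<longrightarrow>
        (\<Inter>n. cball_in nrm M (c n) (r n)) \<noteq> {})"

definition spherical_completion ::
  "('k::field \<Rightarrow> 'e::ab_group_add \<Rightarrow> 'e) \<Rightarrow> ('e \<Rightarrow> real) \<Rightarrow>
   ('k \<Rightarrow> 'f::ab_group_add \<Rightarrow> 'f) \<Rightarrow> ('f \<Rightarrow> real) \<Rightarrow> 'f set \<Rightarrow> ('e \<Rightarrow> 'f) \<Rightarrow> bool" where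
  "spherical_completion sE nE sF nF M i \<longleftrightarrow>
     module.subspace sF M \<and> spherically_complete nF M \<and>
     Vector_Spaces.linear sE sF i \<and> range i \<subseteq> M \<and> (\<forall>x. nF (i x) = nE x) \<and>
     (\<forall>N. module.subspace sF N \<and> N \<subseteq> M \<and> range i \<subseteq> N \<and> spherically_complete nF N
          \<longrightarrow> N = M)"

end

theory Submission
  imports Defs
begin

text \<open>Immediate extensions of Im f inside F are closed under unions of chains, so Zorn's lemma
  gives a maximal one, M. If some x had no best approximation in M, every nonzero vector of
  span (M \<union> {x}) could be shortened by subtracting an element of M; that span would then still
  be immediate over Im f, contradicting maximality. So every point of F has a best approximation
  in M, and this makes M spherically complete: a nested sequence of balls of M has a common
  point x in F, and a best approximation of x in M lies in all of the balls. Finally, if N is a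
  spherically complete subspace between Im f and M, then for x in M and a best approximation y
  of x in N the error x - y is orthogonal to Im f, hence zero.\<close>

definition best_approximation :: "('v::ab_group_add \<Rightarrow> real) \<Rightarrow> 'v set \<Rightarrow> 'v \<Rightarrow> 'v \<Rightarrow> bool" where
  "best_approximation nrm M x y \<longleftrightarrow> y \<in> M \<and> (\<forall>z\<in>M. nrm (x - y) \<le> nrm (x - z))"

definition proximinal :: "('v::ab_group_add \<Rightarrow> real) \<Rightarrow> 'v set \<Rightarrow> bool" where
  "proximinal nrm M \<longleftrightarrow> (\<forall>x. \<exists>y. best_approximation nrm M x y)"

locale ultranormed_space =
  fixes absK :: "'k::field \<Rightarrow> real" and sc :: "'k \<Rightarrow> 'v::ab_group_add \<Rightarrow> 'v" and nrm :: "'v \<Rightarrow> real"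
  assumes valued_field: "ultra_valued_field absK" and normed_space: "ultra_normed_space absK sc nrm"
begin

sublocale vector_space sc
  using normed_space by (simp add: ultra_normed_space_def)

lemma norm_nonneg: "nrm x \<ge> 0"
  using normed_space by (simp add: ultra_normed_space_def)

lemma norm_eq_zero_iff: "nrm x = 0 \<longleftrightarrow> x = 0"
  using normed_space by (simp add: ultra_normed_space_def)

lemma norm_zero [simp]: "nrm 0 = 0"
  by (simp add: norm_eq_zero_iff)

lemma norm_pos_iff: "nrm x > 0 \<longleftrightarrow> x \<noteq> 0"
  using norm_nonneg[of x] norm_eq_zero_iff[of x] by linarith

lemma norm_scale: "nrm (sc a x) = absK a * nrm x"
  using normed_space by (simp add: ultra_normed_space_def)

lemma norm_add_le_max: "nrm (x + y) \<le> max (nrm x) (nrm y)"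
  using normed_space by (simp add: ultra_normed_space_def)

lemma absK_pos: "a \<noteq> 0 \<Longrightarrow> absK a > 0"
  using valued_field by (simp add: ultra_valued_field_def)

lemma absK_minus_one: "absK (-1) = 1"
proof -
  have mult: "absK (a * b) = absK a * absK b" for a b
    using valued_field by (simp add: ultra_valued_field_def)
  have "absK 1 = 1"
    using mult[of 1 1] absK_pos[of 1] by simp
  then have "absK (-1) * absK (-1) = 1"
    using mult[of "-1" "-1"] by simp
  then show ?thesis
    using absK_pos[of "-1"] square_eq_1_iff by force
qed

lemma norm_minus: "nrm (- x) = nrm x"
  using norm_scale[of "-1" x] absK_minus_one by simp

lemma norm_minus_commute: "nrm (x - y) = nrm (y - x)"
  using norm_minus[of "x - y"] by simp

lemma norm_diff_le_max: "nrm (x - z) \<le> max (nrm (x - y)) (nrm (y - z))"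
  using norm_add_le_max[of "x - y" "y - z"] by simp

lemma cball_in_subset:
  assumes "nrm (b - a) \<le> r" and "s \<le> r"
  shows "cball_in nrm M b s \<subseteq> cball_in nrm M a r"
proof
  fix y assume "y \<in> cball_in nrm M b s"
  then have "y \<in> M" "nrm (y - b) \<le> r"
    using assms(2) by (auto simp: cball_in_def)
  then show "y \<in> cball_in nrm M a r"
    using norm_diff_le_max[of y a b] assms(1) by (simp add: cball_in_def)
qed

lemma orth_m_iff:
  assumes "0 \<in> V"
  shows "orth_m nrm x V \<longleftrightarrow> (\<forall>v\<in>V. nrm x \<le> nrm (x - v))"
proof -
  have bdd: "bdd_below ((\<lambda>v. nrm (x - v)) ` V)"
    by (rule bdd_belowI[of _ 0]) (auto simp: norm_nonneg)
  have "(INF v\<in>V. nrm (x - v)) \<le> nrm x"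
    using cINF_lower[OF bdd assms] by simp
  moreover have "nrm x \<le> (INF v\<in>V. nrm (x - v)) \<longleftrightarrow> (\<forall>v\<in>V. nrm x \<le> nrm (x - v))"
    using assms cINF_lower[OF bdd] by (auto intro: cINF_greatest dest: order_trans)
  ultimately show ?thesis
    unfolding orth_m_def by linarith
qed

lemma immediate_iff:
  assumes "0 \<in> g ` A"
  shows "immediate nrm g A M \<longleftrightarrow> (\<forall>v\<in>M. v \<noteq> 0 \<longrightarrow> (\<exists>w\<in>g ` A. nrm (v - w) < nrm v))"
  unfolding immediate_def orth_m_iff[OF assms] not_le[symmetric] by blast

lemma immediate_self:
  assumes "0 \<in> A"
  shows "immediate nrm id A A"
  unfolding immediate_def
proof (intro ballI impI)
  fix v assume "v \<in> A" and "orth_m nrm v (id ` A)"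
  then have "\<forall>w\<in>A. nrm v \<le> nrm (v - w)"
    using orth_m_iff[of "id ` A"] assms by simp
  then have "nrm v \<le> nrm (v - v)"
    using \<open>v \<in> A\<close> by blast
  then show "v = 0"
    using norm_nonneg[of v] by (simp add: norm_eq_zero_iff[symmetric])
qed

lemma immediate_Union:
  assumes "\<And>M. M \<in> C \<Longrightarrow> immediate nrm g A M"
  shows "immediate nrm g A (\<Union>C)"
  using assms by (auto simp: immediate_def)

lemma immediate_trans:
  assumes "0 \<in> A" and "0 \<in> M"
    and "immediate nrm id A M" and "immediate nrm id M N"
  shows "immediate nrm id A N"
proof -
  have "\<exists>w\<in>A. nrm (v - w) < nrm v" if "v \<in> N" "v \<noteq> 0" for v
  proof -
    obtain m where m: "m \<in> M" "nrm (v - m) < nrm v"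
      using assms(2,4) \<open>v \<in> N\<close> \<open>v \<noteq> 0\<close> by (auto simp: immediate_iff)
    have "nrm m \<le> nrm v"
      using norm_diff_le_max[of m 0 v] m(2) by (simp add: norm_minus_commute)
    moreover have "m \<noteq> 0"
      using m(2) by auto
    then obtain w where w: "w \<in> A" "nrm (m - w) < nrm m"
      using assms(1,3) m(1) by (auto simp: immediate_iff)
    ultimately have "nrm (v - w) < nrm v"
      using norm_diff_le_max[of v w m] m(2) by linarith
    with w(1) show ?thesis ..
  qed
  with assms(1) show ?thesis
    by (simp add: immediate_iff)
qed

lemma subspace_Union_chain:
  assumes "C \<noteq> {}" and "subset.chain {M. subspace M} C"
  shows "subspace (\<Union>C)"
proof (rule subspaceI)
  have sub: "\<And>M. M \<in> C \<Longrightarrow> subspace M"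
    using assms(2) by (auto simp: subset_chain_def)
  show "0 \<in> \<Union>C"
    using assms(1) sub subspace_0 by blast
  show "x + y \<in> \<Union>C" if xy: "x \<in> \<Union>C" "y \<in> \<Union>C" for x y
  proof -
    obtain X Y where XY: "X \<in> C" "Y \<in> C" "x \<in> X" "y \<in> Y"
      using xy by blast
    then have "X \<subseteq> Y \<or> Y \<subseteq> X"
      using assms(2) by (auto simp: subset_chain_def)
    then obtain Z where "Z \<in> C" "x \<in> Z" "y \<in> Z"
      using XY by blast
    then show ?thesis
      using sub subspace_add by blast
  qed
  show "sc c x \<in> \<Union>C" if "x \<in> \<Union>C" for c x
    using that sub subspace_scale by blast
qed

lemma proximinal_if_spherically_complete:
  assumes "spherically_complete nrm N" and "N \<noteq> {}"
  shows "proximinal nrm N"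
  unfolding proximinal_def
proof
  fix x
  define d where "d = (INF z\<in>N. nrm (x - z))"
  define r where "r k = d + inverse (real (Suc k))" for k
  have bdd: "bdd_below ((\<lambda>z. nrm (x - z)) ` N)"
    by (rule bdd_belowI[of _ 0]) (auto simp: norm_nonneg)
  have d_le: "d \<le> nrm (x - z)" if "z \<in> N" for z
    unfolding d_def using cINF_lower[OF bdd that] .
  have "\<exists>z\<in>N. nrm (x - z) < r k" for k
  proof -
    have "d < r k"
      by (simp add: r_def)
    then show ?thesis
      using cINF_less_iff[OF assms(2) bdd] by (simp add: d_def)
  qed
  then obtain c where c: "\<And>k. c k \<in> N" "\<And>k. nrm (x - c k) < r k"
    by metis
  have r_Suc_le: "r (Suc k) \<le> r k" for k
    by (simp add: r_def)
  have "d \<ge> 0"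
    unfolding d_def using assms(2) by (intro cINF_greatest) (auto simp: norm_nonneg)
  then have r_nonneg: "r k \<ge> 0" for k
    by (simp add: r_def)
  \<comment> \<open>All these balls contain x in the ambient space, and ultrametric balls with a common
    point are nested according to their radii.\<close>
  have "cball_in nrm N (c (Suc k)) (r (Suc k)) \<subseteq> cball_in nrm N (c k) (r k)" for k
  proof (rule cball_in_subset)
    show "nrm (c (Suc k) - c k) \<le> r k"
      using norm_diff_le_max[of "c (Suc k)" "c k" x] c(2)[of k] c(2)[of "Suc k"] r_Suc_le[of k]
      by (simp add: norm_minus_commute[of "c (Suc k)" x])
  qed (rule r_Suc_le)
  then have "(\<Inter>k. cball_in nrm N (c k) (r k)) \<noteq> {}"
    using assms(1) c(1) r_nonneg by (simp add: spherically_complete_def)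
  then obtain y where y: "\<And>k. y \<in> cball_in nrm N (c k) (r k)"
    by blast
  have "nrm (x - y) \<le> r k" for k
  proof -
    have "max (nrm (x - c k)) (nrm (c k - y)) \<le> r k"
      using y[of k] c(2)[of k] by (simp add: cball_in_def norm_minus_commute[of y])
    then show ?thesis
      using norm_diff_le_max[of x y "c k"] by linarith
  qed
  then have "nrm (x - y) \<le> d"
    by (intro LIMSEQ_le_const[OF LIMSEQ_inverse_real_of_nat_add]) (auto simp: r_def)
  with y[of 0] d_le show "\<exists>y. best_approximation nrm N x y"
    by (force simp: best_approximation_def cball_in_def)
qed

lemma nested_cball_in_centre_dist:
  assumes "\<And>n. c n \<in> M" and "\<And>n. r n \<ge> 0"
    and "\<And>n. cball_in nrm M (c (Suc n)) (r (Suc n)) \<subseteq> cball_in nrm M (c n) (r n)"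
    and "k \<le> l"
  shows "nrm (c l - c k) \<le> Min (r ` {..k})"
proof -
  have "Min (r ` {..k}) \<in> r ` {..k}"
    by (rule Min_in) auto
  then obtain j where j: "j \<le> k" "Min (r ` {..k}) = r j"
    by (metis atMost_iff imageE)
  have "c m \<in> cball_in nrm M (c j) (r j)" if "j \<le> m" for m
  proof -
    have "c m \<in> cball_in nrm M (c m) (r m)"
      using assms(1,2) by (simp add: cball_in_def)
    also have "\<dots> \<subseteq> cball_in nrm M (c j) (r j)"
      using lift_Suc_antimono_le[of "\<lambda>n. cball_in nrm M (c n) (r n)", OF assms(3) that] .
    finally show ?thesis .
  qed
  then have "nrm (c l - c j) \<le> r j" "nrm (c k - c j) \<le> r j"
    using j(1) assms(4) by (auto simp: cball_in_def)
  then have "max (nrm (c l - c j)) (nrm (c j - c k)) \<le> r j"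
    by (simp add: norm_minus_commute[of "c j" "c k"])
  then show ?thesis
    using norm_diff_le_max[of "c l" "c k" "c j"] j(2) by linarith
qed

lemma spherically_complete_if_proximinal:
  assumes "spherically_complete nrm UNIV" and "proximinal nrm M"
  shows "spherically_complete nrm M"
  unfolding spherically_complete_def
proof (intro allI impI)
  fix c r
  assume "(\<forall>n. c n \<in> M \<and> 0 \<le> r n) \<and>
    (\<forall>n. cball_in nrm M (c (Suc n)) (r (Suc n)) \<subseteq> cball_in nrm M (c n) (r n))"
  then have c: "\<And>n. c n \<in> M" and r: "\<And>n. r n \<ge> 0"
    and nested: "\<And>n. cball_in nrm M (c (Suc n)) (r (Suc n)) \<subseteq> cball_in nrm M (c n) (r n)"
    by auto
  \<comment> \<open>Inclusion of balls in M does not make the radii decrease; their running minima do.\<close>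
  define \<rho> where "\<rho> k = Min (r ` {..k})" for k
  have \<rho>_le: "\<rho> k \<le> r k" for k
    by (simp add: \<rho>_def)
  have "cball_in nrm UNIV (c (Suc k)) (\<rho> (Suc k)) \<subseteq> cball_in nrm UNIV (c k) (\<rho> k)" for k
  proof (rule cball_in_subset)
    show "nrm (c (Suc k) - c k) \<le> \<rho> k"
      unfolding \<rho>_def by (rule nested_cball_in_centre_dist[where c = c and r = r, OF c r nested]) simp
    show "\<rho> (Suc k) \<le> \<rho> k"
      unfolding \<rho>_def by (rule Min_antimono) auto
  qed
  moreover have "\<rho> k \<ge> 0" for k
    using r by (simp add: \<rho>_def)
  ultimately have "(\<Inter>k. cball_in nrm UNIV (c k) (\<rho> k)) \<noteq> {}"
    using assms(1) by (simp add: spherically_complete_def)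
  then obtain x where x: "\<And>k. nrm (x - c k) \<le> \<rho> k"
    by (auto simp: cball_in_def)
  obtain y where y: "best_approximation nrm M x y"
    using assms(2) by (auto simp: proximinal_def)
  have "y \<in> cball_in nrm M (c k) (r k)" for k
  proof (rule ccontr)
    assume "y \<notin> cball_in nrm M (c k) (r k)"
    then have "r k < nrm (y - c k)"
      using y by (auto simp: best_approximation_def cball_in_def)
    moreover have "nrm (y - c k) \<le> max (nrm (x - y)) (nrm (x - c k))"
      using norm_diff_le_max[of y "c k" x] by (simp add: norm_minus_commute[of y x])
    ultimately have "nrm (x - c k) < nrm (x - y)"
      using x[of k] \<rho>_le[of k] by linarith
    with y c[of k] show False
      by (auto simp: best_approximation_def not_le[symmetric])
  qed
  then show "(\<Inter>n. cball_in nrm M (c n) (r n)) \<noteq> {}"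
    by blast
qed

lemma immediate_span_insert:
  assumes "subspace M" and no_best: "\<nexists>y. best_approximation nrm M x y"
  shows "immediate nrm id M (span (insert x M))"
proof -
  have closer: "\<exists>c\<in>M. nrm (x - c) < nrm (x - p)" if "p \<in> M" for p
    using no_best that by (auto simp: best_approximation_def not_le)
  have "\<exists>m\<in>M. nrm (v - m) < nrm v" if v: "v \<in> span (insert x M)" "v \<noteq> 0" for v
  proof -
    obtain k where "v - sc k x \<in> span M"
      using v(1) by (auto simp: span_insert)
    then have k: "v - sc k x \<in> M"
      using assms(1) by (metis span_eq_iff)
    show ?thesis
    proof (cases "k = 0")
      case True
      then show ?thesis
        using k v(2) by (intro bexI[of _ v]) (auto simp: norm_pos_iff)
    next
      case False
      define p where "p = sc (- inverse k) (v - sc k x)"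
      have "p \<in> M"
        using k assms(1) by (simp add: p_def subspace_scale subspace_neg)
      then obtain c where c: "c \<in> M" "nrm (x - c) < nrm (x - p)"
        using closer by blast
      have "v = sc k (x - p)"
        using False by (simp add: p_def scale_right_diff_distrib)
      moreover have "v - ((v - sc k x) + sc k c) = sc k (x - c)"
        by (simp add: scale_right_diff_distrib)
      moreover have "(v - sc k x) + sc k c \<in> M"
        using k c(1) assms(1) by (simp add: subspace_add subspace_scale)
      ultimately show ?thesis
        using c(2) absK_pos[OF False] by (metis norm_scale mult_strict_left_mono)
    qed
  qed
  then show ?thesis
    using assms(1) by (simp add: immediate_iff subspace_0)
qed

lemma proximinal_if_maximal_immediate:
  assumes "subspace M" and "0 \<in> A" and "immediate nrm id A M"
    and maximal: "\<And>N. subspace N \<Longrightarrow> M \<subseteq> N \<Longrightarrow> immediate nrm id A N \<Longrightarrow> N = M"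
  shows "proximinal nrm M"
  unfolding proximinal_def
proof (rule allI, rule ccontr)
  fix x
  assume no_best: "\<nexists>y. best_approximation nrm M x y"
  have "immediate nrm id A (span (insert x M))"
    using immediate_trans[OF assms(2) subspace_0[OF assms(1)] assms(3)]
      immediate_span_insert[OF assms(1) no_best] .
  then have "span (insert x M) = M"
    by (intro maximal) (auto intro: span_base)
  then have "x \<in> M"
    using span_superset by blast
  then have "best_approximation nrm M x x"
    by (simp add: best_approximation_def norm_nonneg)
  with no_best show False
    by blast
qed

lemma immediate_subspace_eq_if_spherically_complete:
  assumes "subspace M" and "subspace N" and "0 \<in> A" and "A \<subseteq> N" and "N \<subseteq> M"
    and "immediate nrm id A M" and "spherically_complete nrm N"
  shows "N = M"
proof
  show "M \<subseteq> N"
  proof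
    fix x assume "x \<in> M"
    have "proximinal nrm N"
      using assms(2,7) subspace_0 by (auto intro: proximinal_if_spherically_complete)
    then obtain y where "best_approximation nrm N x y"
      by (auto simp: proximinal_def)
    then have y: "y \<in> N" "\<And>z. z \<in> N \<Longrightarrow> nrm (x - y) \<le> nrm (x - z)"
      by (auto simp: best_approximation_def)
    have "x - y = 0"
    proof (rule ccontr)
      assume "x - y \<noteq> 0"
      moreover have "x - y \<in> M"
        using \<open>x \<in> M\<close> y(1) assms(1,5) subspace_diff by blast
      ultimately obtain w where w: "w \<in> A" "nrm (x - y - w) < nrm (x - y)"
        using assms(3,6) by (auto simp: immediate_iff)
      have "y + w \<in> N"
        using y(1) w(1) assms(2,4) subspace_add by blast
      with y(2) w(2) show False
        by (fastforce simp: diff_diff_eq)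
    qed
    with y(1) show "x \<in> N"
      by simp
  qed
qed (rule assms(5))

lemma maximal_immediate_extension_exists:
  assumes "subspace A"
  defines "S \<equiv> {M. subspace M \<and> A \<subseteq> M \<and> immediate nrm id A M}"
  shows "\<exists>M\<in>S. \<forall>N\<in>S. M \<subseteq> N \<longrightarrow> N = M"
proof (rule subset_Zorn_nonempty)
  show "S \<noteq> {}"
    using assms(1) subspace_0[OF assms(1)] immediate_self unfolding S_def by blast
next
  fix C assume C: "C \<noteq> {}" "subset.chain S C"
  then have "C \<subseteq> S"
    by (simp add: subset_chain_def)
  have "subspace (\<Union>C)"
    using C by (intro subspace_Union_chain) (auto simp: S_def subset_chain_def)
  moreover have "A \<subseteq> \<Union>C"
    using \<open>C \<subseteq> S\<close> C(1) by (auto simp: S_def)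
  moreover have "immediate nrm id A (\<Union>C)"
    using \<open>C \<subseteq> S\<close> by (intro immediate_Union) (auto simp: S_def)
  ultimately show "\<Union>C \<in> S"
    by (simp add: S_def)
qed

end

theorem proposition6p3:
  fixes absK :: "'k::field \<Rightarrow> real"
    and sE :: "'k \<Rightarrow> 'e::ab_group_add \<Rightarrow> 'e" and nE :: "'e \<Rightarrow> real"
    and sF :: "'k \<Rightarrow> 'f::ab_group_add \<Rightarrow> 'f" and nF :: "'f \<Rightarrow> real"
    and f :: "'e \<Rightarrow> 'f"
    and S :: "'f set set"
  assumes "ultra_valued_field absK"
    and "ultra_normed_space absK sE nE"
    and "ultra_normed_space absK sF nF"
    and "spherically_complete nF UNIV"
    and "Vector_Spaces.linear sE sF f"
    and "\<forall>x. nF (f x) = nE x"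
    and "S = {M. module.subspace sF M \<and> range f \<subseteq> M \<and> immediate nF id (range f) M}"
  shows "(\<exists>M\<in>S. \<forall>N\<in>S. M \<subseteq> N \<longrightarrow> N = M)
     \<and> (\<forall>M\<in>S. (\<forall>N\<in>S. M \<subseteq> N \<longrightarrow> N = M) \<longrightarrow> spherical_completion sE nE sF nF M f)"
proof -
  interpret F: ultranormed_space absK sF nF
    using assms(1,3) by unfold_locales
  interpret f: Vector_Spaces.linear sE sF f
    by (rule assms(5))
  have range_f: "F.subspace (range f)"
    using f.subspace_image[of UNIV] by simp
  then have "0 \<in> range f"
    by (rule F.subspace_0)
  have "spherical_completion sE nE sF nF M f"
    if "M \<in> S" and maximal: "\<forall>N\<in>S. M \<subseteq> N \<longrightarrow> N = M" for M
  proof -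
    have M: "F.subspace M" "range f \<subseteq> M" "immediate nF id (range f) M"
      using \<open>M \<in> S\<close> assms(7) by auto
    have "proximinal nF M"
      by (rule F.proximinal_if_maximal_immediate[OF M(1) \<open>0 \<in> range f\<close> M(3)])
        (use maximal assms(7) M(2) in auto)
    then have "spherically_complete nF M"
      by (rule F.spherically_complete_if_proximinal[OF assms(4)])
    moreover have "N = M"
      if "F.subspace N" "N \<subseteq> M" "range f \<subseteq> N" "spherically_complete nF N" for N
      using F.immediate_subspace_eq_if_spherically_complete
        [OF M(1) that(1) \<open>0 \<in> range f\<close> that(3) that(2) M(3) that(4)] .
    ultimately show ?thesis
      using M(1,2) assms(5,6) unfolding spherical_completion_def by blast
  qed
  with F.maximal_immediate_extension_exists[OF range_f] show ?thesis
    unfolding assms(7) by blast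
qed

end
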